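(* Let $l\ge0$ and suppose $\tau\in S_n$ has at least $l+1$ runs. Then $$\sum_{\substack{Pr\in\mathcal{P}ref_n\\ \operatorname{diagword}(Pr)=\tau\\ l(Pr)=l}} t^{\operatorname{area}(Pr)}q^{\operatorname{dinv}(Pr)}Q_{\operatorname{ides}(Pr)} = \Bigg(\sum_{\substack{Pr\in\mathcal{P}ref_n\\ \operatorname{diagword}(Pr)=\tau\\ l(Pr)=l}} t^{\operatorname{area}(Pr)}q^{\operatorname{dinv}(Pr)}\Bigg)\cdot\frac{\sum_{\pi\in\operatorname{Yconsec}(\tau)}q^{\operatorname{inv}(\pi)}Q_{\operatorname{ides}(\tau)\cup\operatorname{ides}(\pi)}}{\sum_{\pi\in\operatorname{Yconsec}(\tau)}q^{\operatorname{inv}(\pi)}}.$$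
   Context: Runs of a permutation are its maximal increasing contiguous segments. A preference function on $n$ cars is a map $f:[n]\to[n]$; $\mathcal{P}ref_n$ is the set of them. It is drawn as a labeled lattice path in the $n\times n$ grid: for $j=1,\dots,n$ in turn, the cars in $f^{-1}(j)$ are written in column $j$ in increasing order bottom to top in the lowest unused rows. A car in the cell with lower-left corner $(x,y)$ lies in diagonal $y-x$. The deviation $l(Pr)$ is the maximum over cars of minus their diagonal (always $\ge0$). $\operatorname{area}(Pr)=\sum_c(d(c)+l(Pr))$, $d(c)$ the diagonal of car $c$. $\operatorname{dinv}(Pr)$ = (number of pairs of cars in the same diagonal with the left one smaller) + (number of pairs $b<a$ with $a$ in diagonal $m+1$, $b$ in diagonal $m$, and $b$ in a column strictly right of $a$) + (number of cars in negative diagonals). $\operatorname{diagword}(Pr)$ lists the cars of each nonempty diagonal in increasing order, diagonals from highest to lowest. The word $\sigma(Pr)$ reads the cars from highest to lowest diagonal and, within a diagonal, from right to left. For a permutation $\sigma\in S_n$ in one-line notation, $\operatorname{ides}(\sigma)=\{i\in[n-1]: i+1 \text{ appears to the left of } i \text{ in } \sigma\}$, and $\operatorname{ides}(Pr)=\operatorname{ides}(\sigma(Pr))$; $\operatorname{inv}(\pi)=\#\{i<j:\pi_i>\pi_j\}$. The consecutive blocks of $\tau$ are the parts of the set partition of $[n]$ in which $i$ and $i+1$ are in the same part iff $i$ appears immediately to the left of $i+1$ in $\tau$; $\operatorname{Yconsec}(\tau)\subseteq S_n$ is the Young subgroup of permutations of $[n]$ mapping each consecutive block of $\tau$ to itself.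 For $S\subseteq[n-1]$, $Q_S=\sum x_{a_1}\cdots x_{a_n}$, summed over $a_1\le\dots\le a_n$ (positive integers) with $a_i<a_{i+1}$ whenever $i\in S$ (Gessel's fundamental quasisymmetric function). *)

theory Defs
  imports "HOL-Library.FuncSet" "HOL-Combinatorics.Multiset_Permutations"
begin

(* Permutations of [n] are lists in one-line notation (permutations_of_set {1..n}).
   Preference functions are f : {1..n} \<rightarrow> {1..n}, extensional (f c = undefined outside). *)

definition Pref :: "nat \<Rightarrow> (nat \<Rightarrow> nat) set" where
  "Pref n = {1..n} \<rightarrow>\<^sub>E {1..n}"

(* lattice path picture: car c sits in column f c, i.e. its cell has lower-left x-coordinate f c - 1;
   its row (lower-left y-coordinate) is the number of cars placed before it *)
definition pcol :: "(nat \<Rightarrow> nat) \<Rightarrow> nat \<Rightarrow> nat" where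
  "pcol f c = f c - 1"

definition prow :: "nat \<Rightarrow> (nat \<Rightarrow> nat) \<Rightarrow> nat \<Rightarrow> nat" where
  "prow n f c = card {c' \<in> {1..n}. f c' < f c} + card {c' \<in> {1..n}. f c' = f c \<and> c' < c}"

definition pdiag :: "nat \<Rightarrow> (nat \<Rightarrow> nat) \<Rightarrow> nat \<Rightarrow> int" where
  "pdiag n f c = int (prow n f c) - int (pcol f c)"

definition pdev :: "nat \<Rightarrow> (nat \<Rightarrow> nat) \<Rightarrow> int" where
  "pdev n f = Max ((\<lambda>c. - pdiag n f c) ` {1..n})"

definition parea :: "nat \<Rightarrow> (nat \<Rightarrow> nat) \<Rightarrow> nat" where
  "parea n f = nat (\<Sum>c\<in>{1..n}. pdiag n f c + pdev n f)"

definition pdinv :: "nat \<Rightarrow> (nat \<Rightarrow> nat) \<Rightarrow> nat" where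
  "pdinv n f =
     card {(a, b). a \<in> {1..n} \<and> b \<in> {1..n} \<and> pdiag n f a = pdiag n f b
                   \<and> pcol f a < pcol f b \<and> a < b}
   + card {(a, b). a \<in> {1..n} \<and> b \<in> {1..n} \<and> b < a
                   \<and> pdiag n f a = pdiag n f b + 1 \<and> pcol f b > pcol f a}
   + card {c \<in> {1..n}. pdiag n f c < 0}"

definition diagcars :: "nat \<Rightarrow> (nat \<Rightarrow> nat) \<Rightarrow> int \<Rightarrow> nat set" where
  "diagcars n f k = {c \<in> {1..n}. pdiag n f c = k}"

(* all diagonals lie in [-n, n]; listed from highest to lowest *)
definition diagword :: "nat \<Rightarrow> (nat \<Rightarrow> nat) \<Rightarrow> nat list" where
  "diagword n f = concat (map (\<lambda>k. sorted_list_of_set (diagcars n f k)) (rev [- int n .. int n]))"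

definition sigmaword :: "nat \<Rightarrow> (nat \<Rightarrow> nat) \<Rightarrow> nat list" where
  "sigmaword n f = concat (map (\<lambda>k. rev (sort_key (pcol f) (sorted_list_of_set (diagcars n f k))))
                              (rev [- int n .. int n]))"

definition ides :: "nat list \<Rightarrow> nat set" where
  "ides \<sigma> = {i \<in> {1..<length \<sigma>}. \<exists>a b. a < b \<and> b < length \<sigma> \<and> \<sigma> ! a = i + 1 \<and> \<sigma> ! b = i}"

definition inv_count :: "nat list \<Rightarrow> nat" where
  "inv_count \<pi> = card {(i, j). i < j \<and> j < length \<pi> \<and> \<pi> ! i > \<pi> ! j}"

definition nruns :: "nat list \<Rightarrow> nat" where
  "nruns \<tau> = card {i. i < length \<tau> \<and> (i = 0 \<or> \<tau> ! (i - 1) > \<tau> ! i)}"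

definition consec_adj :: "nat list \<Rightarrow> nat \<Rightarrow> bool" where
  "consec_adj \<tau> i = (\<exists>j. j + 1 < length \<tau> \<and> \<tau> ! j = i \<and> \<tau> ! (j + 1) = i + 1)"

definition same_block :: "nat list \<Rightarrow> nat \<Rightarrow> nat \<Rightarrow> bool" where
  "same_block \<tau> i k = (\<forall>m. min i k \<le> m \<and> m < max i k \<longrightarrow> consec_adj \<tau> m)"

definition Yconsec :: "nat list \<Rightarrow> nat list set" where
  "Yconsec \<tau> = {\<pi> \<in> permutations_of_set {1..length \<tau>}.
                   \<forall>i \<in> {1..length \<tau>}. same_block \<tau> i (\<pi> ! (i - 1))}"

(* coefficient of the monomial \<Prod>_k x_k^(\<alpha> k) in Gessel's Q_S of degree n *)
definition Qcoeff :: "nat \<Rightarrow> nat set \<Rightarrow> (nat \<Rightarrow> nat) \<Rightarrow> nat" where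
  "Qcoeff n S \<alpha> = card {a :: nat list. length a = n \<and> (\<forall>i < n. 1 \<le> a ! i)
       \<and> (\<forall>i. i + 1 < n \<longrightarrow> a ! i \<le> a ! (i + 1))
       \<and> (\<forall>i \<in> S. 1 \<le> i \<and> i < n \<longrightarrow> a ! (i - 1) < a ! i)
       \<and> (\<forall>k. count (mset a) k = \<alpha> k)}"

end

theory Submission imports Defs begin

text \<open>Cars in one consecutive block of \<open>\<tau> = diagword(Pr)\<close> lie in one diagonal, because the path
  climbs from a diagonal to the next only by a column step with a smaller car below a larger one.
  Hence permuting the labels within the blocks, i.e. acting by the Young subgroup of \<open>\<tau>\<close>, keeps
  every car's diagonal and so preserves \<open>diagword\<close>, area and deviation, and it changes \<open>dinv\<close> only
  through the pairs inside blocks. Standardizing each block by columns gives a block permutation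
  \<open>std(Pr)\<close> with \<open>dinv(Pr) = dinv'(Pr) + inv(std(Pr))\<close> and
  \<open>ides(Pr) = ides(\<tau>) \<union> des(std(Pr))\<close>, where \<open>dinv'\<close> is invariant under relabelling.
  The map \<open>(Pr, \<rho>) \<mapsto> (Pr relabelled by std(Pr)^-1 \<circ> \<rho>, std(Pr))\<close> is a weight-preserving
  involution of \<open>paths \<times> Young subgroup\<close>, which after clearing the denominator is the identity.\<close>

lemma sorted_wrt_conj_neq:
  "distinct xs \<Longrightarrow> sorted_wrt P xs \<Longrightarrow> sorted_wrt (\<lambda>x y. P x y \<and> x \<noteq> y) xs"
  by (induction xs) auto

lemma distinct_if_sorted_wrt_irrefl:
  "sorted_wrt P xs \<Longrightarrow> (\<And>x. \<not> P x x) \<Longrightarrow> distinct xs"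
  by (induction xs) auto

lemma sorted_wrt_greater_rev_upto: "sorted_wrt (>) (rev [i .. j])"
  by (simp add: sorted_wrt_rev sorted_wrt_upto)

lemma ides_sorted_wrt:
  assumes d: "distinct xs" and s: "sorted_wrt R xs" and asym: "\<And>x y. R x y \<Longrightarrow> \<not> R y x"
    and st: "set xs = {1..length xs}"
  shows "ides xs = {i \<in> {1..<length xs}. R (Suc i) i}"
proof -
  have "(\<exists>a b. a < b \<and> b < length xs \<and> xs ! a = i + 1 \<and> xs ! b = i) \<longleftrightarrow> R (Suc i) i"
    if i: "i \<in> {1..<length xs}" for i
  proof
    assume "\<exists>a b. a < b \<and> b < length xs \<and> xs ! a = i + 1 \<and> xs ! b = i"
    then obtain a b where ab: "a < b" "b < length xs" "xs ! a = i + 1" "xs ! b = i" by auto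
    have "R (xs ! a) (xs ! b)" using s ab(1,2) by (simp add: sorted_wrt_iff_nth_less)
    then show "R (Suc i) i" using ab by simp
  next
    assume r: "R (Suc i) i"
    have "Suc i \<in> set xs" "i \<in> set xs" using i st by auto
    then obtain a b where a: "a < length xs" "xs ! a = Suc i" and b: "b < length xs" "xs ! b = i"
      by (metis in_set_conv_nth)
    have "a \<noteq> b" using a b by auto
    moreover have "\<not> b < a"
    proof
      assume "b < a"
      then have "R (xs ! b) (xs ! a)" using sorted_wrt_nth_less[OF s _ a(1)] by simp
      then show False using a b asym r by auto
    qed
    ultimately show "\<exists>a b. a < b \<and> b < length xs \<and> xs ! a = i + 1 \<and> xs ! b = i" using a b
      by (intro exI[of _ a] exI[of _ b]) auto
  qed
  then show ?thesis unfolding ides_def by auto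
qed

lemma card_Collect_bij_betw_eq:
  assumes "bij_betw r S S" "\<And>a. a \<in> S \<Longrightarrow> P a = Q (r a)"
  shows "card {a \<in> S. P a} = card {a \<in> S. Q a}"
proof -
  have "bij_betw r {a \<in> S. P a} {a \<in> S. Q a}"
    using assms unfolding bij_betw_def inj_on_def by (auto simp: image_iff) (metis imageE)
  then show ?thesis by (rule bij_betw_same_card)
qed

lemma card_pairs_permutes_eq:
  assumes "r permutes S" "\<And>a b. a \<in> S \<Longrightarrow> b \<in> S \<Longrightarrow> P a b = Q (r a) (r b)"
  shows "card {(a, b). a \<in> S \<and> b \<in> S \<and> P a b} = card {(a, b). a \<in> S \<and> b \<in> S \<and> Q a b}"
proof -
  have r: "bij_betw r S S" using permutes_imp_bij[OF assms(1)] .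
  have "card {x \<in> S \<times> S. case_prod P x} = card {x \<in> S \<times> S. case_prod Q x}"
    by (rule card_Collect_bij_betw_eq[OF bij_betw_map_prod[OF r r]]) (use assms in auto)
  moreover have "{(a, b). a \<in> S \<and> b \<in> S \<and> R a b} = {x \<in> S \<times> S. case_prod R x}" for R
    by auto
  ultimately show ?thesis by simp
qed

lemma same_block_refl: "same_block t i i"
  unfolding same_block_def by auto

lemma same_block_sym: "same_block t i k \<Longrightarrow> same_block t k i"
  unfolding same_block_def by (auto simp: min.commute max.commute)

lemma same_block_trans:
  assumes "same_block t i j" "same_block t j k"
  shows "same_block t i k"
  unfolding same_block_def
proof (intro allI impI)
  fix m assume m: "min i k \<le> m \<and> m < max i k"
  have "(min i j \<le> m \<and> m < max i j) \<or> (min j k \<le> m \<and> m < max j k)" using m by linarith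
  then show "consec_adj t m" using assms unfolding same_block_def by blast
qed

lemma same_block_cong:
  assumes "same_block t x x'" "same_block t y y'"
  shows "same_block t x' y' \<longleftrightarrow> same_block t x y"
  using assms same_block_trans same_block_sym by metis

lemma same_block_between: "same_block t i k \<Longrightarrow> i \<le> j \<Longrightarrow> j \<le> k \<Longrightarrow> same_block t i j"
  unfolding same_block_def by auto

lemma same_block_less:
  assumes "\<not> same_block t x y" "x < y" "same_block t x x'" "same_block t y y'"
  shows "x' < y'"
proof -
  obtain m where m: "x \<le> m" "m < y" "\<not> consec_adj t m"
    using assms(1,2) unfolding same_block_def by auto
  have "x' \<le> m"
  proof (rule ccontr)
    assume "\<not> x' \<le> m" then show False using assms(3) m unfolding same_block_def by auto
  qed
  moreover have "m < y'"
  proof (rule ccontr)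
    assume "\<not> m < y'" then show False using assms(4) m unfolding same_block_def by auto
  qed
  ultimately show ?thesis by simp
qed

lemma same_block_less_iff:
  assumes "\<not> same_block t x y" "same_block t x x'" "same_block t y y'"
  shows "x' < y' \<longleftrightarrow> x < y"
proof -
  have "x \<noteq> y" using assms(1) same_block_refl by metis
  then consider "x < y" | "y < x" by linarith
  then show ?thesis
  proof cases
    case 1 then show ?thesis using same_block_less[OF assms(1) 1 assms(2,3)] by simp
  next
    case 2 then show ?thesis using same_block_less[of t y x y' x'] assms same_block_sym by fastforce
  qed
qed

definition block_perms :: "nat list \<Rightarrow> nat \<Rightarrow> (nat \<Rightarrow> nat) set" where
  "block_perms t n = {r. r permutes {1..n} \<and> (\<forall>i. same_block t i (r i))}"

lemma block_perms_permutes: "r \<in> block_perms t n \<Longrightarrow> r permutes {1..n}"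
  unfolding block_perms_def by auto

lemma block_perms_same_block: "r \<in> block_perms t n \<Longrightarrow> same_block t i (r i)"
  unfolding block_perms_def by auto

lemma block_perms_comp: "r \<in> block_perms t n \<Longrightarrow> s \<in> block_perms t n \<Longrightarrow> r \<circ> s \<in> block_perms t n"
  unfolding block_perms_def using permutes_compose same_block_trans by fastforce

lemma block_perms_inv:
  assumes "r \<in> block_perms t n"
  shows "inv r \<in> block_perms t n"
proof -
  have p: "r permutes {1..n}" using assms by (rule block_perms_permutes)
  have "same_block t i (inv r i)" for i
    using block_perms_same_block[OF assms, of "inv r i"] permutes_inverses(1)[OF p] same_block_sym
    by metis
  then show ?thesis using permutes_inv[OF p] unfolding block_perms_def by auto
qed

definition perm_inv_count :: "nat \<Rightarrow> (nat \<Rightarrow> nat) \<Rightarrow> nat" where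
  "perm_inv_count n r = card {(x, y). x \<in> {1..n} \<and> y \<in> {1..n} \<and> x < y \<and> r y < r x}"

definition perm_descents :: "nat \<Rightarrow> (nat \<Rightarrow> nat) \<Rightarrow> nat set" where
  "perm_descents n r = {i \<in> {1..<n}. r (Suc i) < r i}"

definition inv_word :: "nat \<Rightarrow> (nat \<Rightarrow> nat) \<Rightarrow> nat list" where
  "inv_word n r = map (inv r) [1..<Suc n]"

lemma inv_word_nth: "i < n \<Longrightarrow> inv_word n r ! i = inv r (Suc i)"
  unfolding inv_word_def by (simp add: nth_upt del: upt_Suc)

lemma length_inv_word: "length (inv_word n r) = n"
  unfolding inv_word_def by simp

lemma inv_word_in_Yconsec:
  assumes r: "r \<in> block_perms t n" and len: "length t = n"
  shows "inv_word n r \<in> Yconsec t"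
proof -
  have p: "inv r permutes {1..n}" using permutes_inv[OF block_perms_permutes[OF r]] .
  have "set (inv_word n r) = inv r ` {1..n}" unfolding inv_word_def by auto
  then have "set (inv_word n r) = {1..n}" using permutes_image[OF p] by simp
  moreover have "distinct (inv_word n r)" unfolding inv_word_def using permutes_inj[OF p]
    by (simp add: distinct_map inj_on_subset)
  moreover have "same_block t i (inv_word n r ! (i - 1))" if "i \<in> {1..length t}" for i
    using that len inv_word_nth[of "i - 1" n r] block_perms_same_block[OF block_perms_inv[OF r]]
    by auto
  ultimately show ?thesis using len unfolding Yconsec_def permutations_of_set_def by auto
qed

lemma inj_on_inv_word: "inj_on (inv_word n) (block_perms t n)"
proof (rule inj_onI)
  fix r s assume r: "r \<in> block_perms t n" and s: "s \<in> block_perms t n"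
    and e: "inv_word n r = inv_word n s"
  have pr: "r permutes {1..n}" and ps: "s permutes {1..n}" using block_perms_permutes r s by blast+
  have "inv r x = inv s x" for x
  proof (cases "x \<in> {1..n}")
    case True
    then show ?thesis using arg_cong[OF e, of "\<lambda>w. w ! (x - 1)"] inv_word_nth[of "x - 1" n] by auto
  next
    case False
    then show ?thesis using permutes_inv[OF pr] permutes_inv[OF ps] unfolding permutes_def by auto
  qed
  then have "inv r = inv s" by auto
  then show "r = s" using permutes_bij[OF pr] permutes_bij[OF ps] by (metis inv_inv_eq)
qed

lemma permutation_of_set_nth_permutes:
  assumes "\<pi> \<in> permutations_of_set {1..n}"
  defines "p \<equiv> \<lambda>i. if i \<in> {1..n} then \<pi> ! (i - 1) else i"
  shows "p permutes {1..n}"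
proof -
  have sp: "set \<pi> = {1..n}" and dp: "distinct \<pi>" using assms(1) unfolding permutations_of_set_def by auto
  have lp: "length \<pi> = n" using distinct_card[OF dp] sp by simp
  have "p ` {1..n} = set \<pi>"
  proof
    show "p ` {1..n} \<subseteq> set \<pi>" unfolding p_def using lp by auto
    show "set \<pi> \<subseteq> p ` {1..n}"
    proof
      fix x assume "x \<in> set \<pi>"
      then obtain j where j: "j < n" "\<pi> ! j = x" using lp by (metis in_set_conv_nth)
      then have "p (Suc j) = x" unfolding p_def by auto
      then show "x \<in> p ` {1..n}" using j by force
    qed
  qed
  moreover have "inj_on p {1..n}"
  proof (rule inj_onI)
    fix a b assume a: "a \<in> {1..n}" and b: "b \<in> {1..n}" and e: "p a = p b"
    then have "\<pi> ! (a - 1) = \<pi> ! (b - 1)" unfolding p_def by auto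
    then have "a - 1 = b - 1" using nth_eq_iff_index_eq[OF dp, of "a - 1" "b - 1"] lp a b by auto
    then show "a = b" using a b by auto
  qed
  ultimately have "bij_betw p {1..n} {1..n}" using sp unfolding bij_betw_def by simp
  then show ?thesis by (rule bij_imp_permutes) (auto simp: p_def)
qed

lemma inv_word_surj:
  assumes pi: "\<pi> \<in> Yconsec t" and len: "length t = n"
  shows "\<exists>r \<in> block_perms t n. inv_word n r = \<pi>"
proof -
  have pp: "\<pi> \<in> permutations_of_set {1..n}"
    and sb: "\<forall>i \<in> {1..n}. same_block t i (\<pi> ! (i - 1))"
    using pi len unfolding Yconsec_def by auto
  define p where "p i = (if i \<in> {1..n} then \<pi> ! (i - 1) else i)" for i
  have pper: "p permutes {1..n}" unfolding p_def by (rule permutation_of_set_nth_permutes[OF pp])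
  have pB: "p \<in> block_perms t n"
    unfolding block_perms_def using pper sb by (auto simp: p_def same_block_refl)
  have lp: "length \<pi> = n" using length_finite_permutations_of_set[OF pp] by simp
  have "inv_word n (inv p) = \<pi>"
  proof (rule nth_equalityI)
    show "length (inv_word n (inv p)) = length \<pi>" using length_inv_word lp by simp
    fix j assume "j < length (inv_word n (inv p))"
    then have j: "j < n" using length_inv_word by simp
    have "inv_word n (inv p) ! j = p (Suc j)"
      using inv_word_nth[OF j] permutes_bij[OF pper] by (simp add: inv_inv_eq)
    then show "inv_word n (inv p) ! j = \<pi> ! j" unfolding p_def using j by auto
  qed
  then show ?thesis using block_perms_inv[OF pB] by blast
qed

lemma bij_betw_inv_word: "length t = n \<Longrightarrow> bij_betw (inv_word n) (block_perms t n) (Yconsec t)"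
  unfolding bij_betw_def using inj_on_inv_word inv_word_in_Yconsec inv_word_surj by fastforce

lemma inv_count_inv_word:
  assumes p: "r permutes {1..n}"
  shows "inv_count (inv_word n r) = perm_inv_count n r"
proof -
  have ri: "\<And>x. r (inv r x) = x" and ir: "\<And>x. inv r (r x) = x" using permutes_inverses[OF p] by auto
  have rin: "\<And>x. x \<in> {1..n} \<Longrightarrow> r x \<in> {1..n}" by (simp only: permutes_in_image[OF p])
  have irin: "\<And>x. x \<in> {1..n} \<Longrightarrow> inv r x \<in> {1..n}"
    by (simp only: permutes_in_image[OF permutes_inv[OF p]])
  let ?A = "{(x, y). x \<in> {1..n} \<and> y \<in> {1..n} \<and> x < y \<and> r y < r x}"
  let ?B = "{(i, j). i < j \<and> j < length (inv_word n r) \<and> inv_word n r ! i > inv_word n r ! j}"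
  have "bij_betw (\<lambda>(x, y). (r y - 1, r x - 1)) ?A ?B"
  proof (rule bij_betw_byWitness[where f' = "\<lambda>(i, j). (inv r (Suc j), inv r (Suc i))"])
    show "\<forall>a\<in>?A. (\<lambda>(i, j). (inv r (Suc j), inv r (Suc i))) ((\<lambda>(x, y). (r y - 1, r x - 1)) a) = a"
    proof
      fix a assume "a \<in> ?A"
      then obtain x y where a: "a = (x, y)" "x \<in> {1..n}" "y \<in> {1..n}" by auto
      then have "r x \<ge> 1" "r y \<ge> 1" using rin by force+
      then show "(\<lambda>(i, j). (inv r (Suc j), inv r (Suc i))) ((\<lambda>(x, y). (r y - 1, r x - 1)) a) = a"
        using a ir by simp
    qed
    show "\<forall>a\<in>?B. (\<lambda>(x, y). (r y - 1, r x - 1)) ((\<lambda>(i, j). (inv r (Suc j), inv r (Suc i))) a) = a"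
      using ri by auto
    show "(\<lambda>(x, y). (r y - 1, r x - 1)) ` ?A \<subseteq> ?B"
    proof
      fix b assume "b \<in> (\<lambda>(x, y). (r y - 1, r x - 1)) ` ?A"
      then obtain x y where xy: "x \<in> {1..n}" "y \<in> {1..n}" "x < y" "r y < r x"
        and b: "b = (r y - 1, r x - 1)" by auto
      have "r x \<in> {1..n}" "r y \<in> {1..n}" using rin xy by auto
      moreover have "inv_word n r ! (r y - 1) = y" "inv_word n r ! (r x - 1) = x"
        using inv_word_nth[of "r y - 1" n r] inv_word_nth[of "r x - 1" n r] ir
          \<open>r x \<in> {1..n}\<close> \<open>r y \<in> {1..n}\<close> by auto
      ultimately show "b \<in> ?B" using b xy length_inv_word[of n r] by auto
    qed
    show "(\<lambda>(i, j). (inv r (Suc j), inv r (Suc i))) ` ?B \<subseteq> ?A"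
    proof
      fix a assume "a \<in> (\<lambda>(i, j). (inv r (Suc j), inv r (Suc i))) ` ?B"
      then obtain i j where ij: "i < j" "j < n" "inv_word n r ! i > inv_word n r ! j"
        and a: "a = (inv r (Suc j), inv r (Suc i))"
        using length_inv_word[of n r] by auto
      have "inv r (Suc i) > inv r (Suc j)" using ij inv_word_nth[of i n r] inv_word_nth[of j n r] by auto
      moreover have "inv r (Suc i) \<in> {1..n}" "inv r (Suc j) \<in> {1..n}" using irin ij by auto
      ultimately show "a \<in> ?A" using a ri ij by auto
    qed
  qed
  then have "card ?A = card ?B" by (rule bij_betw_same_card)
  then show ?thesis unfolding inv_count_def perm_inv_count_def by simp
qed

lemma ides_inv_word:
  assumes p: "r permutes {1..n}"
  shows "ides (inv_word n r) = perm_descents n r"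
proof -
  have ri: "\<And>x. r (inv r x) = x" and ir: "\<And>x. inv r (r x) = x" using permutes_inverses[OF p] by auto
  have rin: "\<And>x. x \<in> {1..n} \<Longrightarrow> r x \<in> {1..n}" by (simp only: permutes_in_image[OF p])
  have "(\<exists>a b. a < b \<and> b < n \<and> inv_word n r ! a = i + 1 \<and> inv_word n r ! b = i) \<longleftrightarrow> r (Suc i) < r i"
    if i: "i \<in> {1..<n}" for i
  proof
    assume "\<exists>a b. a < b \<and> b < n \<and> inv_word n r ! a = i + 1 \<and> inv_word n r ! b = i"
    then obtain a b where ab: "a < b" "b < n" "inv_word n r ! a = i + 1" "inv_word n r ! b = i" by auto
    then have "inv r (Suc a) = Suc i" "inv r (Suc b) = i" using inv_word_nth[of a n r] inv_word_nth[of b n r] by auto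
    then have "r (Suc i) = Suc a" "r i = Suc b" using ri by metis+
    then show "r (Suc i) < r i" using ab by simp
  next
    assume h: "r (Suc i) < r i"
    have "r (Suc i) \<in> {1..n}" "r i \<in> {1..n}" using rin i by auto
    then show "\<exists>a b. a < b \<and> b < n \<and> inv_word n r ! a = i + 1 \<and> inv_word n r ! b = i"
      using h inv_word_nth[of "r (Suc i) - 1" n r] inv_word_nth[of "r i - 1" n r] ir
      by (intro exI[of _ "r (Suc i) - 1"] exI[of _ "r i - 1"]) auto
  qed
  then show ?thesis unfolding ides_def perm_descents_def length_inv_word by auto
qed

lemma sum_Yconsec_eq_sum_block_perms:
  assumes "length t = n"
  shows "(\<Sum>\<pi>\<in>Yconsec t. h (inv_count \<pi>) (ides \<pi>))
       = (\<Sum>r\<in>block_perms t n. h (perm_inv_count n r) (perm_descents n r))"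
proof -
  have "(\<Sum>\<pi>\<in>Yconsec t. h (inv_count \<pi>) (ides \<pi>))
      = (\<Sum>r\<in>block_perms t n. h (inv_count (inv_word n r)) (ides (inv_word n r)))"
    by (rule sum.reindex_bij_betw[OF bij_betw_inv_word[OF assms], symmetric])
  also have "\<dots> = (\<Sum>r\<in>block_perms t n. h (perm_inv_count n r) (perm_descents n r))"
    using inv_count_inv_word[OF block_perms_permutes] ides_inv_word[OF block_perms_permutes]
    by (intro sum.cong) auto
  finally show ?thesis .
qed

text \<open>Multiplied by the denominator, both sides are sums over \<open>S \<times> B\<close>, matched term by term by
  the involution \<open>(f, r) \<mapsto> (g f r, \<kappa> f)\<close>.\<close>

lemma sum_factor_by_involution:
  fixes w :: "'s \<Rightarrow> 'a :: field" and u F :: "'b \<Rightarrow> 'a"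
  assumes "(\<Sum>r\<in>B. u r) \<noteq> 0"
    and \<kappa>: "\<And>f. f \<in> S \<Longrightarrow> \<kappa> f \<in> B"
    and g: "\<And>f r. f \<in> S \<Longrightarrow> r \<in> B \<Longrightarrow>
              g f r \<in> S \<and> \<kappa> (g f r) = r \<and> w (g f r) = w f \<and> g (g f r) (\<kappa> f) = f"
  shows "(\<Sum>f\<in>S. w f * u (\<kappa> f) * F (\<kappa> f))
       = (\<Sum>f\<in>S. w f * u (\<kappa> f)) * (\<Sum>r\<in>B. u r * F r) / (\<Sum>r\<in>B. u r)"
proof -
  define \<Phi> where "\<Phi> = (\<lambda>(f, r). (g f r, \<kappa> f))"
  define a where "a = (\<lambda>(f, r). w f * u (\<kappa> f) * F (\<kappa> f) * u r)"
  define b where "b = (\<lambda>(f, r). w f * u (\<kappa> f) * (u r * F r))"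
  have \<Phi>: "\<Phi> x \<in> S \<times> B" "\<Phi> (\<Phi> x) = x" "b (\<Phi> x) = a x" if "x \<in> S \<times> B" for x
    using that g[of "fst x" "snd x"] \<kappa>[of "fst x"]
    by (auto simp: \<Phi>_def a_def b_def split: prod.splits)
  have "sum a (S \<times> B) = sum b (S \<times> B)"
    by (rule sum.reindex_bij_witness[of _ \<Phi> \<Phi>]) (use \<Phi> in auto)
  then have "(\<Sum>f\<in>S. w f * u (\<kappa> f) * F (\<kappa> f)) * (\<Sum>r\<in>B. u r)
           = (\<Sum>f\<in>S. w f * u (\<kappa> f)) * (\<Sum>r\<in>B. u r * F r)"
    unfolding a_def b_def sum_product sum.cartesian_product by simp
  then show ?thesis using assms(1) by (simp add: eq_divide_eq)
qed

definition relabel :: "nat \<Rightarrow> (nat \<Rightarrow> nat) \<Rightarrow> (nat \<Rightarrow> nat) \<Rightarrow> nat \<Rightarrow> nat" where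
  "relabel n f r = (\<lambda>c. if c \<in> {1..n} then f (r c) else undefined)"

lemma relabel_relabel:
  assumes "\<And>c. c \<in> {1..n} \<Longrightarrow> s c \<in> {1..n}"
  shows "relabel n (relabel n f r) s = relabel n f (r \<circ> s)"
proof
  fix c show "relabel n (relabel n f r) s c = relabel n f (r \<circ> s) c"
    using assms[of c] unfolding relabel_def by (cases "c \<in> {1..n}") auto
qed

lemma relabel_id: "f \<in> Pref n \<Longrightarrow> relabel n f id = f"
proof
  fix c assume f: "f \<in> Pref n"
  show "relabel n f id c = f c"
    using PiE_arb[of f "{1..n}" "\<lambda>_. {1..n}" c] f unfolding relabel_def Pref_def by auto
qed

locale pref_fun =
  fixes n :: nat and f :: "nat \<Rightarrow> nat"
  assumes pref: "f \<in> Pref n"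
begin

lemma f_in_range: "c \<in> {1..n} \<Longrightarrow> f c \<in> {1..n}"
  using pref unfolding Pref_def by auto

lemma prow_less:
  assumes c: "c \<in> {1..n}" and c': "c' \<in> {1..n}"
    and lt: "f c < f c' \<or> (f c = f c' \<and> c < c')"
  shows "prow n f c < prow n f c'"
proof -
  define A where "A x = {d \<in> {1..n}. f d < f x}" for x
  define E where "E x = {d \<in> {1..n}. f d = f x \<and> d < x}" for x
  define F where "F = {d \<in> {1..n}. f d = f c}"
  have pr: "prow n f x = card (A x) + card (E x)" for x
    unfolding prow_def A_def E_def by simp
  show ?thesis
  proof (cases "f c < f c'")
    case True
    have "E c \<subset> F" using c unfolding E_def F_def by auto
    then have "card (E c) < card F" by (intro psubset_card_mono) (auto simp: F_def)
    moreover have "card (A c) + card F = card (A c \<union> F)"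
      by (subst card_Un_disjoint) (auto simp: A_def F_def)
    moreover have "card (A c \<union> F) \<le> card (A c')"
      using True by (intro card_mono) (auto simp: A_def F_def)
    ultimately show ?thesis unfolding pr by linarith
  next
    case False
    then have eq: "f c = f c'" "c < c'" using lt by auto
    have "A c = A c'" unfolding A_def using eq by auto
    moreover have "E c \<subset> E c'" using eq c unfolding E_def by auto
    then have "card (E c) < card (E c')" by (intro psubset_card_mono) (auto simp: E_def)
    ultimately show ?thesis unfolding pr by simp
  qed
qed

lemma prow_less_iff:
  assumes "c \<in> {1..n}" "c' \<in> {1..n}"
  shows "prow n f c < prow n f c' \<longleftrightarrow> f c < f c' \<or> (f c = f c' \<and> c < c')"
  using prow_less[OF assms] prow_less[OF assms(2,1)] by (metis less_asym linorder_neqE_nat)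

lemma prow_bound:
  assumes c: "c \<in> {1..n}"
  shows "prow n f c < n"
proof -
  let ?A = "{d \<in> {1..n}. f d < f c}" and ?E = "{d \<in> {1..n}. f d = f c \<and> d < c}"
  have "card (?A \<union> ?E) \<le> card ({1..n} - {c})" by (intro card_mono) auto
  moreover have "card (?A \<union> ?E) = card ?A + card ?E" by (subst card_Un_disjoint) auto
  ultimately show ?thesis using c unfolding prow_def by auto
qed

lemma inj_on_prow: "inj_on (prow n f) {1..n}"
proof (rule inj_onI)
  fix c c' assume "c \<in> {1..n}" "c' \<in> {1..n}" "prow n f c = prow n f c'"
  then show "c = c'" using prow_less_iff[of c c'] prow_less_iff[of c' c] by (metis less_irrefl linorder_neqE_nat)
qed

lemma bij_betw_prow: "bij_betw (prow n f) {1..n} {..<n}"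
proof -
  have "prow n f ` {1..n} \<subseteq> {..<n}" using prow_bound by auto
  moreover have "card (prow n f ` {1..n}) = n" using card_image[OF inj_on_prow] by simp
  ultimately have "prow n f ` {1..n} = {..<n}" by (intro card_subset_eq) auto
  then show ?thesis using inj_on_prow unfolding bij_betw_def by simp
qed

definition row_car :: "nat \<Rightarrow> nat" where
  "row_car s = inv_into {1..n} (prow n f) s"

lemma row_car_in: "s < n \<Longrightarrow> row_car s \<in> {1..n}"
  unfolding row_car_def using bij_betw_prow by (metis bij_betw_def inv_into_into lessThan_iff)

lemma prow_row_car: "s < n \<Longrightarrow> prow n f (row_car s) = s"
  unfolding row_car_def using bij_betw_prow by (metis bij_betw_def f_inv_into_f lessThan_iff)

lemma row_car_prow: "c \<in> {1..n} \<Longrightarrow> row_car (prow n f c) = c"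
  unfolding row_car_def using inj_on_prow by (simp add: inv_into_f_f)

lemma pdiag_conv_prow: "c \<in> {1..n} \<Longrightarrow> pdiag n f c = int (prow n f c) - int (f c) + 1"
  using f_in_range[of c] unfolding pdiag_def pcol_def by auto

lemma pdiag_bounds: "c \<in> {1..n} \<Longrightarrow> - int n \<le> pdiag n f c \<and> pdiag n f c \<le> int n"
  using prow_bound[of c] f_in_range[of c] unfolding pdiag_def pcol_def by auto

lemma eq_if_same_pdiag_pcol:
  assumes "c \<in> {1..n}" "c' \<in> {1..n}" "pdiag n f c = pdiag n f c'" "pcol f c = pcol f c'"
  shows "c = c'"
  using assms inj_on_prow unfolding pdiag_def by (auto dest: inj_onD)

lemma row_car_Suc_cases:
  assumes s: "Suc s < n"
  shows "(f (row_car s) = f (row_car (Suc s)) \<and> row_car s < row_car (Suc s)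
          \<and> pdiag n f (row_car (Suc s)) = pdiag n f (row_car s) + 1)
       \<or> (f (row_car s) < f (row_car (Suc s)) \<and> pdiag n f (row_car (Suc s)) \<le> pdiag n f (row_car s))"
proof -
  have i1: "row_car s \<in> {1..n}" and i2: "row_car (Suc s) \<in> {1..n}" using row_car_in s by auto
  have "prow n f (row_car s) < prow n f (row_car (Suc s))" using prow_row_car s by auto
  then have "f (row_car s) < f (row_car (Suc s))
      \<or> (f (row_car s) = f (row_car (Suc s)) \<and> row_car s < row_car (Suc s))"
    using prow_less_iff[OF i1 i2] by simp
  then show ?thesis using pdiag_conv_prow[OF i1] pdiag_conv_prow[OF i2] prow_row_car[of s] prow_row_car[OF s] s
    by auto
qed

lemma exists_step_up:
  assumes "s1 \<le> s2" "s2 < n" "pdiag n f (row_car s1) \<le> k" "pdiag n f (row_car s2) > k"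
  shows "\<exists>s. s1 \<le> s \<and> s < s2 \<and> pdiag n f (row_car s) = k \<and> pdiag n f (row_car (Suc s)) = k + 1
            \<and> row_car s < row_car (Suc s)"
  using assms
proof (induction s2)
  case (Suc s2)
  show ?case
  proof (cases "pdiag n f (row_car s2) > k")
    case True
    then have "s1 \<le> s2" using Suc by (metis le_Suc_eq not_less)
    from Suc.IH[OF this _ Suc.prems(3) True] Suc.prems(2) show ?thesis by force
  next
    case False
    then have "s1 \<le> s2" using Suc.prems by (metis le_Suc_eq not_less)
    then show ?thesis using row_car_Suc_cases[of s2] Suc.prems False
      by (intro exI[of _ s2]) auto
  qed
qed simp

lemma pdiag_row_car_first: "0 < n \<Longrightarrow> pdiag n f (row_car 0) \<le> 0"
  using row_car_in[of 0] prow_row_car[of 0] unfolding pdiag_def by auto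

lemma pdiag_row_car_last: "0 < n \<Longrightarrow> pdiag n f (row_car (n - 1)) \<ge> 0"
  using row_car_in[of "n-1"] prow_row_car[of "n-1"] f_in_range[of "row_car (n-1)"]
  unfolding pdiag_def pcol_def by auto

definition diag_before :: "nat \<Rightarrow> nat \<Rightarrow> bool" where
  "diag_before x y \<longleftrightarrow> pdiag n f y < pdiag n f x \<or> (pdiag n f x = pdiag n f y \<and> x < y)"

definition sigma_before :: "nat \<Rightarrow> nat \<Rightarrow> bool" where
  "sigma_before x y \<longleftrightarrow> pdiag n f y < pdiag n f x \<or> (pdiag n f x = pdiag n f y \<and> pcol f y < pcol f x)"

lemma finite_diagcars: "finite (diagcars n f k)"
  unfolding diagcars_def by auto

lemma sorted_diag_before_concat:
  "sorted_wrt (>) ks \<Longrightarrow> sorted_wrt diag_before (concat (map (\<lambda>k. sorted_list_of_set (diagcars n f k)) ks))"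
proof (induction ks)
  case (Cons k ks)
  have "sorted_wrt diag_before (sorted_list_of_set (diagcars n f k))"
    by (rule sorted_wrt_mono_rel[OF _ strict_sorted_list_of_set])
       (auto simp: diag_before_def finite_diagcars diagcars_def)
  moreover have "\<forall>x\<in>set (sorted_list_of_set (diagcars n f k)).
      \<forall>y\<in>set (concat (map (\<lambda>k. sorted_list_of_set (diagcars n f k)) ks)). diag_before x y"
    using Cons.prems by (auto simp: diag_before_def finite_diagcars diagcars_def)
  ultimately show ?case using Cons by (simp add: sorted_wrt_append)
qed simp

lemma sorted_sigma_before_concat:
  "sorted_wrt (>) ks \<Longrightarrow>
   sorted_wrt sigma_before (concat (map (\<lambda>k. rev (sort_key (pcol f) (sorted_list_of_set (diagcars n f k)))) ks))"
proof (induction ks)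
  case (Cons k ks)
  let ?L = "sort_key (pcol f) (sorted_list_of_set (diagcars n f k))"
  have "sorted_wrt (\<lambda>x y. pcol f x \<le> pcol f y) ?L"
    using sorted_sort_key[of "pcol f"] by (simp add: sorted_map)
  moreover have "distinct ?L" by (simp add: distinct_sort)
  ultimately have s1: "sorted_wrt (\<lambda>x y. pcol f x \<le> pcol f y \<and> x \<noteq> y) ?L"
    using sorted_wrt_conj_neq by blast
  have st: "set ?L = diagcars n f k" by (simp add: finite_diagcars set_sort)
  have "sorted_wrt (\<lambda>x y. sigma_before y x) ?L"
  proof (rule sorted_wrt_mono_rel[OF _ s1])
    fix x y assume xy: "x \<in> set ?L" "y \<in> set ?L" "pcol f x \<le> pcol f y \<and> x \<noteq> y"
    then have "pdiag n f x = k" "pdiag n f y = k" "x \<in> {1..n}" "y \<in> {1..n}"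
      using st unfolding diagcars_def by auto
    then have "pcol f x \<noteq> pcol f y" using eq_if_same_pdiag_pcol xy by metis
    then show "sigma_before y x" using xy \<open>pdiag n f x = k\<close> \<open>pdiag n f y = k\<close>
      unfolding sigma_before_def by auto
  qed
  then have "sorted_wrt sigma_before (rev ?L)" by (simp add: sorted_wrt_rev)
  moreover have "\<forall>x\<in>set (rev ?L). \<forall>y\<in>set (concat (map (\<lambda>k. rev (sort_key (pcol f)
      (sorted_list_of_set (diagcars n f k)))) ks)). sigma_before x y"
    using Cons.prems by (auto simp: sigma_before_def finite_diagcars diagcars_def)
  ultimately show ?case using Cons by (simp add: sorted_wrt_append)
qed simp

lemma sorted_diagword: "sorted_wrt diag_before (diagword n f)"
  unfolding diagword_def by (rule sorted_diag_before_concat[OF sorted_wrt_greater_rev_upto])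

lemma sorted_sigmaword: "sorted_wrt sigma_before (sigmaword n f)"
  unfolding sigmaword_def by (rule sorted_sigma_before_concat[OF sorted_wrt_greater_rev_upto])

lemma UN_diagcars: "(\<Union>k\<in>{- int n .. int n}. diagcars n f k) = {1..n}"
  using pdiag_bounds unfolding diagcars_def by fastforce

lemma set_diagword: "set (diagword n f) = {1..n}"
  unfolding diagword_def using UN_diagcars by (simp add: finite_diagcars)

lemma set_sigmaword: "set (sigmaword n f) = {1..n}"
  unfolding sigmaword_def using UN_diagcars by (simp add: finite_diagcars set_sort)

lemma distinct_diagword: "distinct (diagword n f)"
  using distinct_if_sorted_wrt_irrefl[OF sorted_diagword] unfolding diag_before_def by auto

lemma distinct_sigmaword: "distinct (sigmaword n f)"
  using distinct_if_sorted_wrt_irrefl[OF sorted_sigmaword] unfolding sigma_before_def by auto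

lemma length_diagword: "length (diagword n f) = n"
  using distinct_card[OF distinct_diagword] set_diagword by simp

lemma length_sigmaword: "length (sigmaword n f) = n"
  using distinct_card[OF distinct_sigmaword] set_sigmaword by simp

abbreviation tau :: "nat list" where
  "tau \<equiv> diagword n f"

lemma diag_before_nth:
  "i < i' \<Longrightarrow> i' < n \<Longrightarrow> diag_before (tau ! i) (tau ! i')"
  using sorted_diagword length_diagword by (simp add: sorted_wrt_iff_nth_less)

lemma consec_adj_pdiag_gap:
  assumes ca: "consec_adj tau m" and lt: "pdiag n f (Suc m) < pdiag n f m" and z: "z \<in> {1..n}"
  shows "pdiag n f z = pdiag n f (Suc m) \<Longrightarrow> Suc m \<le> z"
    and "pdiag n f z = pdiag n f (Suc m) + 1 \<Longrightarrow> z \<le> m"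
proof -
  obtain j where j: "j + 1 < n" "tau ! j = m" "tau ! (j + 1) = Suc m"
    using ca length_diagword unfolding consec_adj_def by auto
  obtain i where i: "i < n" "tau ! i = z" using z set_diagword length_diagword by (metis in_set_conv_nth)
  consider "i < j" | "i = j" | "i = j + 1" | "i > j + 1" by linarith
  note cases = this
  show "pdiag n f z = pdiag n f (Suc m) \<Longrightarrow> Suc m \<le> z"
    by (rule cases) (use diag_before_nth[of i j] diag_before_nth[of "j + 1" i] i j lt
        in \<open>auto simp: diag_before_def\<close>)
  show "pdiag n f z = pdiag n f (Suc m) + 1 \<Longrightarrow> z \<le> m"
    by (rule cases) (use diag_before_nth[of i j] diag_before_nth[of "j + 1" i] i j lt
        in \<open>auto simp: diag_before_def\<close>)
qed

lemma pdiag_row_car_stays_below: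
  assumes below: "\<And>z. z \<in> {1..n} \<Longrightarrow> pdiag n f z = k \<Longrightarrow> Suc m \<le> z"
    and above: "\<And>z. z \<in> {1..n} \<Longrightarrow> pdiag n f z = k + 1 \<Longrightarrow> z \<le> m"
    and s: "s1 \<le> s2" "s2 < n" "pdiag n f (row_car s1) \<le> k"
  shows "pdiag n f (row_car s2) \<le> k"
proof (rule ccontr)
  assume "\<not> ?thesis"
  then obtain s where "s < s2" "pdiag n f (row_car s) = k" "pdiag n f (row_car (Suc s)) = k + 1"
      "row_car s < row_car (Suc s)"
    using exists_step_up[OF s] by auto
  then show False using below[of "row_car s"] above[of "row_car (Suc s)"] row_car_in s(2) by fastforce
qed

text \<open>The path can only pass from diagonal \<open>k\<close> to \<open>k + 1\<close> by a column step with a smaller car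
  below a larger one; if \<open>m, m + 1\<close> were adjacent in \<open>\<tau>\<close> across diagonals, every car of the lower
  diagonal would exceed every car of the one above, so the path could never cross between them.
  The rows of \<open>m\<close> and \<open>m + 1\<close>, together with the first row (diagonal \<open>\<le> 0\<close>) and the last row
  (diagonal \<open>\<ge> 0\<close>), show that it must.\<close>

lemma consec_adj_same_pdiag:
  assumes ca: "consec_adj tau m"
  shows "pdiag n f m = pdiag n f (Suc m)"
proof (rule ccontr)
  assume ne: "pdiag n f m \<noteq> pdiag n f (Suc m)"
  define k where "k = pdiag n f (Suc m)"
  obtain j where j: "j + 1 < n" "tau ! j = m" "tau ! (j + 1) = Suc m"
    using ca length_diagword unfolding consec_adj_def by auto
  have mI: "m \<in> {1..n}" and m1I: "Suc m \<in> {1..n}"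
    using j nth_mem[of j tau] nth_mem[of "j + 1" tau] set_diagword length_diagword by auto
  have "diag_before m (Suc m)" using diag_before_nth[of j "j + 1"] j by auto
  then have lt: "k < pdiag n f m" using ne unfolding diag_before_def k_def by auto
  have below: "Suc m \<le> z" if "z \<in> {1..n}" "pdiag n f z = k" for z
    using consec_adj_pdiag_gap(1)[OF ca _ that(1)] lt that(2) unfolding k_def by blast
  have above: "z \<le> m" if "z \<in> {1..n}" "pdiag n f z = k + 1" for z
    using consec_adj_pdiag_gap(2)[OF ca _ that(1)] lt that(2) unfolding k_def by blast
  have stays: "pdiag n f (row_car s2) \<le> k"
    if "s1 \<le> s2" "s2 < n" "pdiag n f (row_car s1) \<le> k" for s1 s2
    using pdiag_row_car_stays_below[OF below above that] .
  define ra where "ra = prow n f m"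
  define rb where "rb = prow n f (Suc m)"
  have ra: "ra < n" "row_car ra = m" using prow_bound[OF mI] row_car_prow[OF mI] ra_def by auto
  have rb: "rb < n" "row_car rb = Suc m" using prow_bound[OF m1I] row_car_prow[OF m1I] rb_def by auto
  have "ra \<noteq> rb" using ra rb by auto
  then consider "rb < ra" | "ra < rb" "pdiag n f (row_car (n - 1)) > k" | "ra < rb" "k \<ge> 0"
    using pdiag_row_car_last[of] ra by fastforce
  then show False
  proof cases
    case 1 then show False using stays[of rb ra] ra rb lt unfolding k_def by simp
  next
    case 2 then show False using stays[of rb "n - 1"] rb unfolding k_def by fastforce
  next
    case 3 then show False using stays[of 0 ra] pdiag_row_car_first ra lt by simp
  qed
qed

lemma same_block_same_pdiag:
  assumes "same_block tau i k"
  shows "pdiag n f i = pdiag n f k"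
proof -
  have along: "pdiag n f i = pdiag n f k"
    if "i \<le> k" "\<forall>m. i \<le> m \<and> m < k \<longrightarrow> consec_adj tau m" for i k
    using that
  proof (induction k)
    case (Suc k)
    show ?case
    proof (cases "i = Suc k")
      case False
      then have "pdiag n f i = pdiag n f k" using Suc by auto
      also have "\<dots> = pdiag n f (Suc k)" using consec_adj_same_pdiag Suc.prems False by auto
      finally show ?thesis .
    qed simp
  qed simp
  show ?thesis
  proof (cases "i \<le> k")
    case True then show ?thesis using along[of i k] assms unfolding same_block_def by auto
  next
    case False then show ?thesis using along[of k i] assms unfolding same_block_def by auto
  qed
qed

lemma same_block_Suc_if_same_pdiag:
  assumes i: "i \<in> {1..n}" "Suc i \<in> {1..n}" and e: "pdiag n f i = pdiag n f (Suc i)"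
  shows "same_block tau i (Suc i)"
proof -
  obtain p where p: "p < n" "tau ! p = i"
    using i set_diagword length_diagword by (metis in_set_conv_nth)
  obtain p' where p': "p' < n" "tau ! p' = Suc i"
    using i set_diagword length_diagword by (metis in_set_conv_nth)
  have "\<not> p' < p"
  proof
    assume "p' < p"
    then have "diag_before (Suc i) i" using diag_before_nth[of p' p] p p' by simp
    then show False using e unfolding diag_before_def by simp
  qed
  moreover have "p \<noteq> p'" using p p' by auto
  moreover have False if "Suc p < p'"
  proof -
    have "diag_before i (tau ! Suc p)" "diag_before (tau ! Suc p) (Suc i)"
      using diag_before_nth[of p "Suc p"] diag_before_nth[of "Suc p" p'] p p' that by auto
    then show False using e unfolding diag_before_def by linarith
  qed
  ultimately have "p' = Suc p" by (metis Suc_lessI linorder_neqE_nat)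
  then have "consec_adj tau i" unfolding consec_adj_def using p p' length_diagword by auto
  then show ?thesis unfolding same_block_def by (simp add: less_Suc_eq_le eq_iff[symmetric])
qed

lemma ides_diagword: "ides tau = {i \<in> {1..<n}. pdiag n f i < pdiag n f (Suc i)}"
proof -
  have "ides tau = {i \<in> {1..<length tau}. diag_before (Suc i) i}"
  proof (rule ides_sorted_wrt[OF distinct_diagword sorted_diagword])
    show "\<And>x y. diag_before x y \<Longrightarrow> \<not> diag_before y x" unfolding diag_before_def by auto
    show "set tau = {1..length tau}" using set_diagword length_diagword by simp
  qed
  then show ?thesis unfolding diag_before_def length_diagword by auto
qed

text \<open>Relabelling the cars within the consecutive blocks of \<open>\<tau>\<close> keeps every car in its
  diagonal: the rows are permuted along with the labels, because two cars of one column lying in a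
  common block would share their diagonal and hence their cell.\<close>

lemma prow_relabel:
  assumes r: "r \<in> block_perms tau n" and c: "c \<in> {1..n}"
  shows "prow n (relabel n f r) c = prow n f (r c)"
proof -
  have p: "r permutes {1..n}" using block_perms_permutes[OF r] .
  have rc: "r c \<in> {1..n}" using c by (simp only: permutes_in_image[OF p])
  have rel: "\<And>a. a \<in> {1..n} \<Longrightarrow> relabel n f r a = f (r a)" unfolding relabel_def by simp
  have "card {c' \<in> {1..n}. relabel n f r c' < relabel n f r c} = card {d \<in> {1..n}. f d < f (r c)}"
    by (rule card_Collect_bij_betw_eq[OF permutes_imp_bij[OF p]]) (use rel c in simp)
  moreover have "card {c' \<in> {1..n}. relabel n f r c' = relabel n f r c \<and> c' < c}
      = card {d \<in> {1..n}. f d = f (r c) \<and> d < r c}"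
  proof (rule card_Collect_bij_betw_eq[OF permutes_imp_bij[OF p]])
    fix a assume a: "a \<in> {1..n}"
    have ra: "r a \<in> {1..n}" using a by (simp only: permutes_in_image[OF p])
    have "a < c \<longleftrightarrow> r a < r c" if "a \<noteq> c" "f (r a) = f (r c)"
    proof -
      have "r a \<noteq> r c" using that(1) permutes_inj[OF p] by (auto dest: injD)
      then have "pdiag n f (r a) \<noteq> pdiag n f (r c)"
        using eq_if_same_pdiag_pcol[OF ra rc] that(2) unfolding pcol_def by auto
      then have "\<not> same_block tau (r a) (r c)" using same_block_same_pdiag by blast
      moreover have sa: "same_block tau a (r a)" and sc: "same_block tau c (r c)"
        using block_perms_same_block[OF r] by auto
      ultimately have "\<not> same_block tau a c" using same_block_cong[OF sa sc] by simp
      then show ?thesis using same_block_less_iff[OF _ sa sc] by simp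
    qed
    then show "(relabel n f r a = relabel n f r c \<and> a < c) = (f (r a) = f (r c) \<and> r a < r c)"
      using rel a c by auto
  qed
  ultimately show ?thesis unfolding prow_def by simp
qed

lemma pcol_relabel: "c \<in> {1..n} \<Longrightarrow> pcol (relabel n f r) c = pcol f (r c)"
  unfolding pcol_def relabel_def by simp

lemma pdiag_relabel:
  assumes r: "r \<in> block_perms tau n" and c: "c \<in> {1..n}"
  shows "pdiag n (relabel n f r) c = pdiag n f (r c)"
  unfolding pdiag_def using prow_relabel[OF r c] pcol_relabel[OF c] by simp

lemma pdiag_relabel_eq:
  assumes r: "r \<in> block_perms tau n" and c: "c \<in> {1..n}"
  shows "pdiag n (relabel n f r) c = pdiag n f c"
  using pdiag_relabel[OF assms] same_block_same_pdiag[OF block_perms_same_block[OF r, of c]] by simp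

lemma relabel_in_Pref:
  assumes r: "r \<in> block_perms tau n"
  shows "relabel n f r \<in> Pref n"
proof -
  have "r c \<in> {1..n}" if "c \<in> {1..n}" for c
    using that by (simp only: permutes_in_image[OF block_perms_permutes[OF r]])
  then show ?thesis unfolding Pref_def relabel_def using f_in_range by auto
qed

lemma diagword_relabel:
  assumes "r \<in> block_perms tau n"
  shows "diagword n (relabel n f r) = tau"
proof -
  have "diagcars n (relabel n f r) = diagcars n f"
    unfolding diagcars_def using pdiag_relabel_eq[OF assms] by (intro ext Collect_cong) auto
  then show ?thesis unfolding diagword_def by simp
qed

lemma pdev_relabel:
  assumes "r \<in> block_perms tau n"
  shows "pdev n (relabel n f r) = pdev n f"
proof -
  have "(\<lambda>c. - pdiag n (relabel n f r) c) ` {1..n} = (\<lambda>c. - pdiag n f c) ` {1..n}"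
    using pdiag_relabel_eq[OF assms] by (intro image_cong) auto
  then show ?thesis unfolding pdev_def by simp
qed

lemma parea_relabel:
  assumes "r \<in> block_perms tau n"
  shows "parea n (relabel n f r) = parea n f"
  unfolding parea_def pdev_relabel[OF assms] using pdiag_relabel_eq[OF assms]
  by (intro arg_cong[where f = nat] sum.cong) auto

text \<open>The standardization \<open>std\<close> of \<open>f\<close> numbers the cars block by block (blocks in increasing
  order), within each block from right to left by column; it is a block permutation of \<open>\<tau>\<close>.\<close>

definition std_less :: "nat \<Rightarrow> nat \<Rightarrow> bool" where
  "std_less z y \<longleftrightarrow> (z < y \<and> \<not> same_block tau z y) \<or> (same_block tau z y \<and> pcol f y < pcol f z)"

definition std :: "nat \<Rightarrow> nat" where
  "std y = (if y \<in> {1..n} then Suc (card {z \<in> {1..n}. std_less z y}) else y)"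

lemma std_less_irrefl: "\<not> std_less y y"
  unfolding std_less_def by auto

lemma std_less_total:
  assumes "y \<in> {1..n}" "z \<in> {1..n}" "y \<noteq> z"
  shows "std_less y z \<or> std_less z y"
proof (cases "same_block tau y z")
  case True
  then have "pcol f y \<noteq> pcol f z"
    using eq_if_same_pdiag_pcol[OF assms(1,2) same_block_same_pdiag] assms(3) by blast
  then show ?thesis using True same_block_sym unfolding std_less_def by (metis linorder_neqE_nat)
next
  case False
  then show ?thesis using same_block_sym assms(3) unfolding std_less_def by (metis linorder_neqE_nat)
qed

lemma std_less_trans:
  assumes ab: "std_less a b" and bc: "std_less b c"
  shows "std_less a c"
proof -
  consider (lt) "a < b" "\<not> same_block tau a b" | (col) "same_block tau a b" "pcol f b < pcol f a"
    using ab unfolding std_less_def by auto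
  then show ?thesis
  proof cases
    case lt
    consider (lt') "b < c" "\<not> same_block tau b c" | (col') "same_block tau b c" "pcol f c < pcol f b"
      using bc unfolding std_less_def by auto
    then show ?thesis
    proof cases
      case lt'
      have "\<not> same_block tau a c" using same_block_between lt lt' by (meson less_imp_le_nat)
      then show ?thesis using lt lt' unfolding std_less_def by auto
    next
      case col'
      have "\<not> same_block tau a c" using lt col' same_block_trans same_block_sym by blast
      moreover have "a < c" using same_block_less[OF lt(2) lt(1) same_block_refl col'(1)] .
      ultimately show ?thesis unfolding std_less_def by auto
    qed
  next
    case col
    consider (lt') "b < c" "\<not> same_block tau b c" | (col') "same_block tau b c" "pcol f c < pcol f b"
      using bc unfolding std_less_def by auto
    then show ?thesis
    proof cases
      case lt'
      have "\<not> same_block tau a c" using col lt' same_block_trans same_block_sym by blast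
      moreover have "a < c" using same_block_less[OF lt'(2) lt'(1) same_block_sym[OF col(1)] same_block_refl] .
      ultimately show ?thesis unfolding std_less_def by auto
    next
      case col'
      then show ?thesis using col same_block_trans unfolding std_less_def by (meson less_trans)
    qed
  qed
qed

lemma std_less_std:
  assumes "y \<in> {1..n}" "y' \<in> {1..n}" "std_less y y'"
  shows "std y < std y'"
proof -
  have "{z \<in> {1..n}. std_less z y} \<subset> {z \<in> {1..n}. std_less z y'}"
    using assms std_less_trans std_less_irrefl by blast
  then have "card {z \<in> {1..n}. std_less z y} < card {z \<in> {1..n}. std_less z y'}"
    by (intro psubset_card_mono) auto
  then show ?thesis using assms unfolding std_def by simp
qed

lemma std_less_iff:
  assumes "y \<in> {1..n}" "y' \<in> {1..n}"
  shows "std y < std y' \<longleftrightarrow> std_less y y'"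
  using std_less_std[OF assms] std_less_std[OF assms(2,1)] std_less_total[OF assms]
  by (metis less_asym less_irrefl)

lemma std_in_range:
  assumes "y \<in> {1..n}"
  shows "std y \<in> {1..n}"
proof -
  have "{z \<in> {1..n}. std_less z y} \<subseteq> {1..n} - {y}" using std_less_irrefl by auto
  then have "card {z \<in> {1..n}. std_less z y} \<le> card ({1..n} - {y})" by (intro card_mono) auto
  then show ?thesis using assms unfolding std_def by auto
qed

lemma std_permutes: "std permutes {1..n}"
proof -
  have inj: "inj_on std {1..n}"
  proof (rule inj_onI)
    fix y y' assume "y \<in> {1..n}" "y' \<in> {1..n}" "std y = std y'"
    then show "y = y'" using std_less_total std_less_std by (metis less_irrefl)
  qed
  have "std ` {1..n} \<subseteq> {1..n}" using std_in_range by auto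
  moreover have "card (std ` {1..n}) = card {1..n}" using card_image[OF inj] by simp
  ultimately have "std ` {1..n} = {1..n}" by (intro card_subset_eq) auto
  then have "bij_betw std {1..n} {1..n}" using inj unfolding bij_betw_def by simp
  moreover have "\<forall>x. x \<notin> {1..n} \<longrightarrow> std x = x" unfolding std_def by simp
  ultimately show ?thesis using bij_imp_permutes by blast
qed

text \<open>Everything \<open>std_less\<close>-below \<open>y\<close> lies in \<open>y\<close>'s block or an earlier one, and everything in
  an earlier block is below \<open>y\<close>; so \<open>std y\<close> cannot leave the block of \<open>y\<close>.\<close>

lemma std_le_if_block_ends:
  assumes y: "y \<in> {1..n}" and m: "y \<le> m" "\<not> consec_adj tau m"
  shows "std y \<le> m"
proof -
  have "{z \<in> {1..n}. std_less z y} \<subseteq> {1..m} - {y}"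
  proof
    fix z assume z: "z \<in> {z \<in> {1..n}. std_less z y}"
    have "z \<le> m"
    proof (cases "same_block tau z y")
      case True
      show ?thesis
      proof (rule ccontr)
        assume "\<not> z \<le> m"
        then have "min z y \<le> m \<and> m < max z y" using m by auto
        then show False using True m unfolding same_block_def by blast
      qed
    next
      case False then show ?thesis using z m unfolding std_less_def by auto
    qed
    then show "z \<in> {1..m} - {y}" using z std_less_irrefl by auto
  qed
  then have "card {z \<in> {1..n}. std_less z y} \<le> card ({1..m} - {y})" by (intro card_mono) auto
  then show ?thesis using y m unfolding std_def by auto
qed

lemma std_gt_if_block_starts:
  assumes y: "y \<in> {1..n}" and m: "m < y" "\<not> consec_adj tau m"
  shows "m < std y"
proof -
  have "{1..m} \<subseteq> {z \<in> {1..n}. std_less z y}"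
  proof
    fix z assume z: "z \<in> {1..m}"
    have "\<not> same_block tau z y" using z m unfolding same_block_def by auto
    then show "z \<in> {z \<in> {1..n}. std_less z y}" using z m y unfolding std_less_def by auto
  qed
  then have "card {1..m} \<le> card {z \<in> {1..n}. std_less z y}" by (intro card_mono) auto
  then show ?thesis using y unfolding std_def by auto
qed

lemma std_in_block_perms: "std \<in> block_perms tau n"
proof -
  have "same_block tau y (std y)" for y
  proof (cases "y \<in> {1..n}")
    case True
    show ?thesis unfolding same_block_def
    proof (intro allI impI)
      fix m assume "min y (std y) \<le> m \<and> m < max y (std y)"
      then show "consec_adj tau m"
        using std_le_if_block_ends[OF True] std_gt_if_block_starts[OF True]
        by (cases "y \<le> std y") (force simp: min_def max_def)+
    qed
  qed (auto simp: std_def same_block_refl)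
  then show ?thesis unfolding block_perms_def using std_permutes by auto
qed

lemma std_less_relabel:
  assumes r: "r \<in> block_perms tau n" and z: "z \<in> {1..n}" and y: "y \<in> {1..n}"
  shows "pref_fun.std_less n (relabel n f r) z y = std_less (r z) (r y)"
proof -
  interpret G: pref_fun n "relabel n f r" using relabel_in_Pref[OF r] by (rule pref_fun.intro)
  have sz: "same_block tau z (r z)" and sy: "same_block tau y (r y)"
    using block_perms_same_block[OF r] by auto
  show ?thesis
    unfolding G.std_less_def diagword_relabel[OF r] std_less_def
    using pcol_relabel z y same_block_cong[OF sz sy] same_block_less_iff[OF _ sz sy] by auto
qed

lemma std_relabel:
  assumes r: "r \<in> block_perms tau n"
  shows "pref_fun.std n (relabel n f r) = std \<circ> r"
proof
  fix y
  have p: "r permutes {1..n}" using block_perms_permutes[OF r] .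
  interpret G: pref_fun n "relabel n f r" using relabel_in_Pref[OF r] by (rule pref_fun.intro)
  show "G.std y = (std \<circ> r) y"
  proof (cases "y \<in> {1..n}")
    case True
    have ry: "r y \<in> {1..n}" using True by (simp only: permutes_in_image[OF p])
    have "card {z \<in> {1..n}. G.std_less z y} = card {z \<in> {1..n}. std_less z (r y)}"
      by (rule card_Collect_bij_betw_eq[OF permutes_imp_bij[OF p]]) (use std_less_relabel[OF r _ True] in simp)
    then show ?thesis unfolding G.std_def using True ry by (simp add: std_def)
  next
    case False
    then have "r y = y" using p unfolding permutes_def by auto
    then show ?thesis unfolding G.std_def using False by (auto simp: std_def)
  qed
qed

text \<open>The part of \<open>dinv\<close> not coming from pairs of cars in a common block of \<open>\<tau>\<close>; those pairs
  are counted by the inversions of \<open>std\<close> (see \<open>pdinv_eq\<close>).\<close>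

definition dinv_ext :: nat where
  "dinv_ext =
     card {(a, b). a \<in> {1..n} \<and> b \<in> {1..n} \<and> pdiag n f a = pdiag n f b
                   \<and> pcol f a < pcol f b \<and> a < b \<and> \<not> same_block tau a b}
   + card {(a, b). a \<in> {1..n} \<and> b \<in> {1..n} \<and> b < a
                   \<and> pdiag n f a = pdiag n f b + 1 \<and> pcol f b > pcol f a}
   + card {c \<in> {1..n}. pdiag n f c < 0}"

lemma pdinv_eq: "pdinv n f = dinv_ext + perm_inv_count n std"
proof -
  define A where "A = {(a, b). a \<in> {1..n} \<and> b \<in> {1..n} \<and> pdiag n f a = pdiag n f b
                   \<and> pcol f a < pcol f b \<and> a < b}"
  define A1 where "A1 = {(a, b). a \<in> {1..n} \<and> b \<in> {1..n} \<and> pdiag n f a = pdiag n f b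
                   \<and> pcol f a < pcol f b \<and> a < b \<and> \<not> same_block tau a b}"
  define A2 where "A2 = {(x, y). x \<in> {1..n} \<and> y \<in> {1..n} \<and> x < y \<and> std y < std x}"
  have "A2 = {(a, b). a \<in> {1..n} \<and> b \<in> {1..n} \<and> a < b \<and> same_block tau a b \<and> pcol f a < pcol f b}"
    unfolding A2_def using std_less_iff same_block_sym unfolding std_less_def by fastforce
  then have "A = A1 \<union> A2" "A1 \<inter> A2 = {}"
    unfolding A_def A1_def using same_block_same_pdiag by auto
  moreover have "finite A1" "finite A2" unfolding A1_def A2_def
    by (rule finite_subset[of _ "{1..n} \<times> {1..n}"], auto)+
  ultimately have "card A = card A1 + card A2" by (simp add: card_Un_disjoint)
  then show ?thesis unfolding pdinv_def dinv_ext_def A_def A1_def A2_def perm_inv_count_def by simp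
qed

lemma dinv_ext_relabel:
  assumes r: "r \<in> block_perms tau n"
  shows "pref_fun.dinv_ext n (relabel n f r) = dinv_ext"
proof -
  let ?g = "relabel n f r"
  have p: "r permutes {1..n}" using block_perms_permutes[OF r] .
  interpret G: pref_fun n ?g using relabel_in_Pref[OF r] by (rule pref_fun.intro)
  have sbr: "\<And>a. same_block tau a (r a)" using block_perms_same_block[OF r] .
  have dg: "\<And>a. a \<in> {1..n} \<Longrightarrow> pdiag n ?g a = pdiag n f (r a)" using pdiag_relabel[OF r] .
  have cg: "\<And>a. a \<in> {1..n} \<Longrightarrow> pcol ?g a = pcol f (r a)" using pcol_relabel .
  have "card {(a, b). a \<in> {1..n} \<and> b \<in> {1..n} \<and> pdiag n ?g a = pdiag n ?g b
                   \<and> pcol ?g a < pcol ?g b \<and> a < b \<and> \<not> same_block tau a b}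
      = card {(a, b). a \<in> {1..n} \<and> b \<in> {1..n} \<and> pdiag n f a = pdiag n f b
                   \<and> pcol f a < pcol f b \<and> a < b \<and> \<not> same_block tau a b}"
  proof (rule card_pairs_permutes_eq[OF p])
    fix a b assume a: "a \<in> {1..n}" and b: "b \<in> {1..n}"
    show "(pdiag n ?g a = pdiag n ?g b \<and> pcol ?g a < pcol ?g b \<and> a < b \<and> \<not> same_block tau a b) =
          (pdiag n f (r a) = pdiag n f (r b) \<and> pcol f (r a) < pcol f (r b) \<and> r a < r b
           \<and> \<not> same_block tau (r a) (r b))"
      using dg[OF a] dg[OF b] cg[OF a] cg[OF b] same_block_cong[OF sbr sbr]
        same_block_less_iff[OF _ sbr sbr] by auto
  qed
  moreover have "card {(a, b). a \<in> {1..n} \<and> b \<in> {1..n} \<and> b < a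
                   \<and> pdiag n ?g a = pdiag n ?g b + 1 \<and> pcol ?g b > pcol ?g a}
      = card {(a, b). a \<in> {1..n} \<and> b \<in> {1..n} \<and> b < a
                   \<and> pdiag n f a = pdiag n f b + 1 \<and> pcol f b > pcol f a}"
  proof (rule card_pairs_permutes_eq[OF p])
    fix a b assume a: "a \<in> {1..n}" and b: "b \<in> {1..n}"
    have "pdiag n f (r a) = pdiag n f (r b) + 1 \<Longrightarrow> \<not> same_block tau b a"
      using same_block_same_pdiag[of "r b" "r a"] same_block_cong[OF sbr sbr, of b a] by auto
    then have "pdiag n f (r a) = pdiag n f (r b) + 1 \<Longrightarrow> (r b < r a) = (b < a)"
      using same_block_less_iff[OF _ sbr sbr] by blast
    then show "(b < a \<and> pdiag n ?g a = pdiag n ?g b + 1 \<and> pcol ?g a < pcol ?g b) =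
          (r b < r a \<and> pdiag n f (r a) = pdiag n f (r b) + 1 \<and> pcol f (r a) < pcol f (r b))"
      using dg[OF a] dg[OF b] cg[OF a] cg[OF b] by auto
  qed
  moreover have "card {c \<in> {1..n}. pdiag n ?g c < 0} = card {c \<in> {1..n}. pdiag n f c < 0}"
    by (rule card_Collect_bij_betw_eq[OF permutes_imp_bij[OF p]]) (use dg in auto)
  ultimately show ?thesis unfolding G.dinv_ext_def dinv_ext_def diagword_relabel[OF r] by simp
qed

lemma ides_sigmaword: "ides (sigmaword n f) = ides tau \<union> perm_descents n std"
proof -
  have "ides (sigmaword n f) = {i \<in> {1..<length (sigmaword n f)}. sigma_before (Suc i) i}"
  proof (rule ides_sorted_wrt[OF distinct_sigmaword sorted_sigmaword])
    show "\<And>x y. sigma_before x y \<Longrightarrow> \<not> sigma_before y x" unfolding sigma_before_def by auto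
    show "set (sigmaword n f) = {1..length (sigmaword n f)}" using set_sigmaword length_sigmaword by simp
  qed
  also have "\<dots> = {i \<in> {1..<n}. pdiag n f i < pdiag n f (Suc i) \<or> std (Suc i) < std i}"
  proof -
    have "sigma_before (Suc i) i \<longleftrightarrow> pdiag n f i < pdiag n f (Suc i) \<or> std (Suc i) < std i"
      if i: "i \<in> {1..<n}" for i
    proof -
      have iI: "i \<in> {1..n}" "Suc i \<in> {1..n}" using i by auto
      have "same_block tau (Suc i) i \<longleftrightarrow> pdiag n f i = pdiag n f (Suc i)"
        using same_block_same_pdiag same_block_Suc_if_same_pdiag[OF iI] same_block_sym by metis
      then show ?thesis using std_less_iff[OF iI(2,1)] unfolding sigma_before_def std_less_def by auto
    qed
    then show ?thesis using length_sigmaword by auto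
  qed
  finally show ?thesis unfolding ides_diagword perm_descents_def by auto
qed

lemma relabel_inv_std:
  assumes r: "r \<in> block_perms tau n"
  defines "g \<equiv> relabel n f (inv std \<circ> r)"
  shows "g \<in> Pref n" "diagword n g = tau" "pdev n g = pdev n f" "parea n g = parea n f"
    "pref_fun.dinv_ext n g = dinv_ext" "pref_fun.std n g = r" "relabel n g (inv r \<circ> std) = f"
proof -
  have rho: "inv std \<circ> r \<in> block_perms tau n"
    using block_perms_comp[OF block_perms_inv[OF std_in_block_perms] r] .
  show "g \<in> Pref n" "diagword n g = tau" "pdev n g = pdev n f" "parea n g = parea n f"
    "pref_fun.dinv_ext n g = dinv_ext"
    unfolding g_def using relabel_in_Pref diagword_relabel pdev_relabel parea_relabel
      dinv_ext_relabel rho by blast+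
  have "pref_fun.std n g = std \<circ> (inv std \<circ> r)" unfolding g_def by (rule std_relabel[OF rho])
  also have "\<dots> = r" using permutes_inv_o(1)[OF std_permutes] by (simp add: o_assoc)
  finally show "pref_fun.std n g = r" .
  have pr: "r permutes {1..n}" using block_perms_permutes[OF r] .
  have "relabel n g (inv r \<circ> std) = relabel n f ((inv std \<circ> r) \<circ> (inv r \<circ> std))"
    unfolding g_def
  proof (rule relabel_relabel)
    fix c assume "c \<in> {1..n}"
    then show "(inv r \<circ> std) c \<in> {1..n}"
      using std_in_range by (simp only: o_apply permutes_in_image[OF permutes_inv[OF pr]])
  qed
  also have "(inv std \<circ> r) \<circ> (inv r \<circ> std) = id"
  proof -
    have "(inv std \<circ> r) \<circ> (inv r \<circ> std) = inv std \<circ> (r \<circ> inv r) \<circ> std" by (simp add: o_assoc)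
    then show ?thesis using permutes_inv_o[OF pr] permutes_inv_o[OF std_permutes] by simp
  qed
  also have "relabel n f id = f" using relabel_id[OF pref] .
  finally show "relabel n g (inv r \<circ> std) = f" .
qed

end

theorem lemma4p1:
  fixes n l :: nat and \<tau> :: "nat list" and t q :: "'a :: field" and \<alpha> :: "nat \<Rightarrow> nat"
  assumes "\<tau> \<in> permutations_of_set {1..n}"
    and "nruns \<tau> \<ge> l + 1"
    and "(\<Sum>\<pi>\<in>Yconsec \<tau>. q ^ inv_count \<pi>) \<noteq> 0"
  shows "(\<Sum>f\<in>{f \<in> Pref n. diagword n f = \<tau> \<and> pdev n f = int l}.
            t ^ parea n f * q ^ pdinv n f * of_nat (Qcoeff n (ides (sigmaword n f)) \<alpha>))
       = (\<Sum>f\<in>{f \<in> Pref n. diagword n f = \<tau> \<and> pdev n f = int l}. t ^ parea n f * q ^ pdinv n f)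
         * (\<Sum>\<pi>\<in>Yconsec \<tau>. q ^ inv_count \<pi> * of_nat (Qcoeff n (ides \<tau> \<union> ides \<pi>) \<alpha>))
         / (\<Sum>\<pi>\<in>Yconsec \<tau>. q ^ inv_count \<pi>)"
proof -
  define S where "S = {f \<in> Pref n. diagword n f = \<tau> \<and> pdev n f = int l}"
  define B where "B = block_perms \<tau> n"
  define \<kappa> where "\<kappa> f = pref_fun.std n f" for f
  define w where "w f = t ^ parea n f * q ^ pref_fun.dinv_ext n f" for f
  define u where "u r = q ^ perm_inv_count n r" for r
  define F where "F r = (of_nat (Qcoeff n (ides \<tau> \<union> perm_descents n r) \<alpha>) :: 'a)" for r
  define g where "g f r = relabel n f (inv (\<kappa> f) \<circ> r)" for f r
  have S: "pref_fun n f" "diagword n f = \<tau>" if "f \<in> S" for f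
    using that unfolding S_def by (auto intro: pref_fun.intro)
  have len: "length \<tau> = n" using length_finite_permutations_of_set[OF assms(1)] by simp
  have pdinv: "t ^ parea n f * q ^ pdinv n f = w f * u (\<kappa> f)" if "f \<in> S" for f
    using pref_fun.pdinv_eq[OF S(1)[OF that]] unfolding w_def u_def \<kappa>_def by (simp add: power_add)
  have sigma: "ides (sigmaword n f) = ides \<tau> \<union> perm_descents n (\<kappa> f)" if "f \<in> S" for f
    using pref_fun.ides_sigmaword[OF S(1)[OF that]] S(2)[OF that] unfolding \<kappa>_def by simp
  have den: "(\<Sum>\<pi>\<in>Yconsec \<tau>. q ^ inv_count \<pi>) = (\<Sum>r\<in>B. u r)"
    using sum_Yconsec_eq_sum_block_perms[OF len, of "\<lambda>i _. q ^ i"] unfolding B_def u_def .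
  have num: "(\<Sum>\<pi>\<in>Yconsec \<tau>. q ^ inv_count \<pi> * of_nat (Qcoeff n (ides \<tau> \<union> ides \<pi>) \<alpha>))
      = (\<Sum>r\<in>B. u r * F r)"
    using sum_Yconsec_eq_sum_block_perms[OF len, of "\<lambda>i D. q ^ i * of_nat (Qcoeff n (ides \<tau> \<union> D) \<alpha>)"]
    unfolding B_def u_def F_def .
  have "(\<Sum>f\<in>S. t ^ parea n f * q ^ pdinv n f * of_nat (Qcoeff n (ides (sigmaword n f)) \<alpha>))
      = (\<Sum>f\<in>S. w f * u (\<kappa> f) * F (\<kappa> f))"
    using pdinv sigma unfolding F_def by (intro sum.cong) auto
  also have "\<dots> = (\<Sum>f\<in>S. w f * u (\<kappa> f)) * (\<Sum>r\<in>B. u r * F r) / (\<Sum>r\<in>B. u r)"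
  proof (rule sum_factor_by_involution[where g = g])
    show "(\<Sum>r\<in>B. u r) \<noteq> 0" using assms(3) den by simp
    show "\<kappa> f \<in> B" if "f \<in> S" for f
      using pref_fun.std_in_block_perms[OF S(1)[OF that]] S(2)[OF that] unfolding \<kappa>_def B_def by simp
    show "g f r \<in> S \<and> \<kappa> (g f r) = r \<and> w (g f r) = w f \<and> g (g f r) (\<kappa> f) = f"
      if f: "f \<in> S" and r: "r \<in> B" for f r
    proof -
      interpret pref_fun n f using S(1)[OF f] .
      have "r \<in> block_perms tau n" using r S(2)[OF f] unfolding B_def by simp
      note rel = relabel_inv_std[OF this, folded \<kappa>_def]
      have "g f r \<in> S" using rel(1-3) f unfolding S_def g_def by simp
      moreover have "\<kappa> (g f r) = r" using rel(6) unfolding g_def .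
      ultimately show ?thesis using rel(4,5,7) unfolding w_def g_def[of "g f r"] by (simp add: g_def)
    qed
  qed
  also have "(\<Sum>f\<in>S. w f * u (\<kappa> f)) = (\<Sum>f\<in>S. t ^ parea n f * q ^ pdinv n f)"
    using pdinv by simp
  finally show ?thesis unfolding S_def[symmetric] num den .
qed

end
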